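(* For every $t\in[0,T]$ and every sufficiently small $\epsilon>0$, $$\mathbb E\big[\|\Theta_1(t)\|_{L^4}^4\big]\le C(H)\,\tau^{4H-1-2\epsilon}\quad\text{and}\quad\mathbb E\big[\|\Theta_2(t)\|_{L^4}^4\big]\le C(H)\,\tau^{4H-1-2\epsilon},$$ with a constant $C(H)$ independent of $t$, $N$ and $\tau$.
   Context: Let $\mathcal D=(0,1)$, $U=L^2(\mathcal D)$, $\|\cdot\|_{L^4}$ the $L^4(\mathcal D)$ norm. $A=-\partial_x^2$ with homogeneous Dirichlet boundary conditions, eigenfunctions $\phi_k(x)=\sqrt2\sin(k\pi x)$, eigenvalues $\lambda_k=k^2\pi^2$. $P_N$ is the orthogonal projection onto $\mathrm{span}\{\phi_1,\dots,\phi_N\}$, $A_N=P_NA$, $S_N(t)=e^{-tA_N}$. Fix $T>0$, $H\in(\frac12,1)$; $\{w_k^H\}$ independent real standard fBms with Hurst parameter $H$ on a probability space, $B^H=\sum_kw_k^H\phi_k$, $\int g\,dB^H:=\sum_k\int g\phi_k\,dw_k^H$. For $M\in\mathbb N$, $\tau=T/M$, $\kappa(t)=\tau\lfloor t/\tau\rfloor$, and $$\Theta_1(t)=\int_{\kappa(t)}^tS_N(t-s)P_N\,dB^H(s),\qquad \Theta_2(t)=\int_0^{\kappa(t)}\big(S_N(t-s)-S_N(\kappa(t)-s)\big)P_N\,dB^H(s).$$ *)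

theory Defs
  imports "HOL-Probability.Probability"
begin

definition fbm_cov :: "real \<Rightarrow> real \<Rightarrow> real \<Rightarrow> real" where
  "fbm_cov H s t = (\<bar>s\<bar> powr (2*H) + \<bar>t\<bar> powr (2*H) - \<bar>t - s\<bar> powr (2*H)) / 2"

(* W is a real standard fractional Brownian motion with Hurst parameter H on (M):
   a centred Gaussian process on [0,\<infinity>) with covariance fbm_cov H and continuous paths.
   Gaussianity: every finite linear combination is centred normal (characteristic
   function exp(-u^2 v/2), v the variance; this includes the degenerate case v = 0). *)
definition is_fbm :: "'a measure \<Rightarrow> real \<Rightarrow> (real \<Rightarrow> 'a \<Rightarrow> real) \<Rightarrow> bool" where
  "is_fbm M H W \<longleftrightarrow>
     (\<forall>t. W t \<in> borel_measurable M) \<and>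
     (\<forall>\<omega>\<in>space M. continuous_on {0..} (\<lambda>t. W t \<omega>)) \<and>
     (\<forall>(ts::real list) (as::real list). length as = length ts \<and> (\<forall>s\<in>set ts. 0 \<le> s) \<longrightarrow>
        (\<forall>u::real. char (distr M borel (\<lambda>\<omega>. \<Sum>i<length ts. as!i * W (ts!i) \<omega>)) u =
           complex_of_real (exp (- (u^2 * (\<Sum>i<length ts. \<Sum>j<length ts.
                 as!i * as!j * fbm_cov H (ts!i) (ts!j))) / 2))))"

(* Wiener integral of a smooth deterministic integrand f over [a,b] against the path W,
   realised pathwise (Riemann--Stieltjes / Young integral via integration by parts). *)
definition wint :: "(real \<Rightarrow> real) \<Rightarrow> real \<Rightarrow> real \<Rightarrow> (real \<Rightarrow> 'a \<Rightarrow> real) \<Rightarrow> 'a \<Rightarrow> real" where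
  "wint f a b W \<omega> = f b * W b \<omega> - f a * W a \<omega> - integral {a..b} (\<lambda>s. deriv f s * W s \<omega>)"

(* Dirichlet Laplacian on (0,1): eigenfunctions and eigenvalues *)
definition phi :: "nat \<Rightarrow> real \<Rightarrow> real" where
  "phi k x = sqrt 2 * sin (real k * pi * x)"

definition lam :: "nat \<Rightarrow> real" where
  "lam k = (real k)^2 * pi^2"

definition kappa :: "real \<Rightarrow> real \<Rightarrow> real" where
  "kappa \<tau> t = \<tau> * of_int \<lfloor>t / \<tau>\<rfloor>"

(* Theta_1(t) = int_{kappa(t)}^t S_N(t-s) P_N dB^H(s), written in the eigenbasis:
   S_N(t-s)P_N phi_k = exp(-lam_k (t-s)) phi_k for k <= N, and 0 for k > N. *)
definition Theta1 :: "(nat \<Rightarrow> real \<Rightarrow> 'a \<Rightarrow> real) \<Rightarrow> nat \<Rightarrow> real \<Rightarrow> real \<Rightarrow> 'a \<Rightarrow> real \<Rightarrow> real" where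
  "Theta1 W N \<tau> t \<omega> x =
     (\<Sum>k=1..N. wint (\<lambda>s. exp (- lam k * (t - s))) (kappa \<tau> t) t (W k) \<omega> * phi k x)"

(* Theta_2(t) = int_0^{kappa(t)} (S_N(t-s) - S_N(kappa(t)-s)) P_N dB^H(s) *)
definition Theta2 :: "(nat \<Rightarrow> real \<Rightarrow> 'a \<Rightarrow> real) \<Rightarrow> nat \<Rightarrow> real \<Rightarrow> real \<Rightarrow> 'a \<Rightarrow> real \<Rightarrow> real" where
  "Theta2 W N \<tau> t \<omega> x =
     (\<Sum>k=1..N. wint (\<lambda>s. exp (- lam k * (t - s)) - exp (- lam k * (kappa \<tau> t - s)))
                      0 (kappa \<tau> t) (W k) \<omega> * phi k x)"

definition L4pow4 :: "(real \<Rightarrow> real) \<Rightarrow> real" where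
  "L4pow4 u = integral {0..1} (\<lambda>x. \<bar>u x\<bar> ^ 4)"

end

theory Submission
  imports Defs
begin

text \<open>Each mode of \<open>Theta1\<close> and \<open>Theta2\<close> is a pathwise Wiener integral of an exponential
  kernel \<open>A exp (- \<lambda>\<^sub>k (b - s))\<close> against \<open>w\<^sub>k\<close>; integrating by parts, it is the limit of Riemann sums
  that are linear combinations of increments \<open>w\<^sub>k(b) - w\<^sub>k(p)\<close>. At a fixed point \<open>x\<close>, the
  approximating field is a sum of independent centred Gaussians, so its fourth moment is \<open>3 V\<^sup>2\<close>.
  Cauchy-Schwarz for the increment covariance, \<open>|Cov(w(b) - w(p), w(b) - w(q))| \<le> |b - p|\<^sup>H |b - q|\<^sup>H\<close>,
  bounds \<open>V\<close> by \<open>\<Sum>\<^sub>k \<phi>\<^sub>k(x)\<^sup>2 (\<Sum>\<^sub>j |c\<^sub>k\<^sub>j| |b - p\<^sub>j|\<^sup>H)\<^sup>2\<close>, and for the exponential kernel the inner sum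
  is at most \<open>5 \<tau>\<^bsup>H-\<alpha>\<^esup> \<lambda>\<^sub>k\<^bsup>-\<alpha>\<^esup>\<close>: for \<open>Theta1\<close> because the interval has length at most \<open>\<tau>\<close>, for
  \<open>Theta2\<close> because the kernel carries the factor \<open>|exp (- \<lambda>\<^sub>k (t - \<kappa>(t))) - 1| \<le> (\<lambda>\<^sub>k \<tau>)\<^bsup>H-\<alpha>\<^esup>\<close>. Fatou's lemma
  passes the bound to the Wiener integrals, Tonelli integrates it over \<open>x\<close>, and the result is of
  order \<open>\<tau>\<^bsup>4(H-\<alpha>)\<^esup> (\<Sum>\<^sub>k k\<^bsup>-4\<alpha>\<^esup>)\<^sup>2\<close>. Choosing \<open>\<alpha> = 1/4 + \<epsilon>/2\<close> makes the series converge and the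
  exponent \<open>4H - 1 - 2\<epsilon>\<close>; the constraint \<open>\<alpha> < H\<close> is where \<open>\<epsilon> < 2H - 1/2\<close> is needed.\<close>

section \<open>Gaussian fourth moments and fractional Brownian motion\<close>

lemma char_gaussian_variance_nonneg:
  fixes S :: "'a \<Rightarrow> real"
  assumes "prob_space P" and "S \<in> borel_measurable P"
    and "char (distr P borel S) 1 = complex_of_real (exp (- V / 2))"
  shows "0 \<le> V"
proof -
  interpret prob_space P by fact
  have "norm (char (distr P borel S) 1) \<le> 1"
    by (rule real_distribution.cmod_char_le_1) (simp add: assms(2))
  then show ?thesis using assms(3) by simp
qed

lemma gaussian_fourth_moment:
  fixes S :: "'a \<Rightarrow> real"
  assumes P: "prob_space P" and S[measurable]: "S \<in> borel_measurable P"
    and char_S: "\<And>u. char (distr P borel S) u = complex_of_real (exp (- (u^2 * V) / 2))"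
  shows "(\<integral>\<^sup>+\<omega>. ennreal (S \<omega> ^ 4) \<partial>P) = ennreal (3 * V^2)"
proof -
  interpret prob_space P by fact
  have V: "0 \<le> V" using char_gaussian_variance_nonneg[OF P S] char_S[of 1] by simp
  let ?N = "distr std_normal_distribution borel (\<lambda>x. sqrt V * x)"
  interpret std: prob_space std_normal_distribution
    using real_dist_normal_dist real_distribution_def by blast
  have "char ?N = char (distr P borel S)"
  proof
    fix u
    have "char ?N u = char std_normal_distribution (u * sqrt V)"
      unfolding char_def by (subst integral_distr) (auto simp: mult.assoc)
    also have "\<dots> = char (distr P borel S) u"
      using V by (simp add: char_S char_std_normal_distribution power_mult_distrib)
    finally show "char ?N u = char (distr P borel S) u" .
  qed
  then have law: "distr P borel S = ?N"
    by (intro Levy_uniqueness[symmetric]) auto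
  have "sqrt V ^ 4 = V^2"
    using V power_mult[of "sqrt V" 2 2] by simp
  have "(\<integral>\<^sup>+\<omega>. ennreal (S \<omega> ^ 4) \<partial>P) = (\<integral>\<^sup>+y. ennreal (y ^ 4) \<partial>?N)"
    by (simp add: nn_integral_distr flip: law)
  also have "\<dots> = (\<integral>\<^sup>+x. ennreal (V^2 * x ^ (2*2)) \<partial>std_normal_distribution)"
    using \<open>sqrt V ^ 4 = V^2\<close> by (simp add: nn_integral_distr power_mult_distrib)
  also have "\<dots> = ennreal (LINT x|std_normal_distribution. V^2 * x ^ (2*2))"
    using std_normal_distribution_even_moments(2)[of 2] by (intro nn_integral_eq_integral) auto
  also have "\<dots> = ennreal (3 * V^2)"
    using std_normal_distribution_even_moments(1)[of 2] by (simp add: eval_nat_numeral fact_numeral)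
  finally show ?thesis .
qed

lemma is_fbm_char_sum:
  fixes W :: "real \<Rightarrow> 'a \<Rightarrow> real" and I :: "'i set"
  assumes fbm: "is_fbm P H W" and I: "finite I" and s: "\<And>i. i \<in> I \<Longrightarrow> 0 \<le> s i"
  shows "char (distr P borel (\<lambda>\<omega>. \<Sum>i\<in>I. c i * W (s i) \<omega>)) u =
    complex_of_real (exp (- (u^2 * (\<Sum>i\<in>I. \<Sum>j\<in>I. c i * c j * fbm_cov H (s i) (s j))) / 2))"
proof -
  obtain g where g: "bij_betw g {..<card I} I"
    using ex_bij_betw_nat_finite[OF I] atLeast0LessThan by metis
  define ts where "ts = map (s \<circ> g) [0..<card I]"
  define as where "as = map (c \<circ> g) [0..<card I]"
  have len: "length ts = card I" "length as = card I"
    by (auto simp: ts_def as_def)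
  have nth: "ts ! i = s (g i)" "as ! i = c (g i)" if "i < card I" for i
    using that by (auto simp: ts_def as_def)
  have "\<forall>t\<in>set ts. 0 \<le> t"
    using s bij_betwE[OF g] by (auto simp: ts_def)
  then have char_list: "char (distr P borel (\<lambda>\<omega>. \<Sum>i<length ts. as!i * W (ts!i) \<omega>)) u =
      complex_of_real (exp (- (u^2 * (\<Sum>i<length ts. \<Sum>j<length ts.
        as!i * as!j * fbm_cov H (ts!i) (ts!j))) / 2))"
    using fbm len unfolding is_fbm_def by (metis (no_types, lifting))
  have reindex: "(\<Sum>i<card I. h (g i)) = (\<Sum>i\<in>I. h i)" for h :: "'i \<Rightarrow> real"
    by (rule sum.reindex_bij_betw[OF g])
  have "(\<Sum>i<length ts. as!i * W (ts!i) \<omega>) = (\<Sum>i\<in>I. c i * W (s i) \<omega>)" for \<omega>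
    using len nth reindex[of "\<lambda>i. c i * W (s i) \<omega>"] by simp
  moreover have "(\<Sum>i<length ts. \<Sum>j<length ts. as!i * as!j * fbm_cov H (ts!i) (ts!j))
      = (\<Sum>i\<in>I. \<Sum>j\<in>I. c i * c j * fbm_cov H (s i) (s j))"
    using len nth reindex[of "\<lambda>i. \<Sum>j\<in>I. c i * c j * fbm_cov H (s i) (s j)"]
      reindex[of "\<lambda>j. c _ * c j * fbm_cov H (s _) (s j)"] by simp
  ultimately show ?thesis using char_list by simp
qed

lemma is_fbm_quadratic_form_nonneg:
  fixes W :: "real \<Rightarrow> 'a \<Rightarrow> real" and I :: "'i set"
  assumes P: "prob_space P" and fbm: "is_fbm P H W"
    and I: "finite I" and s: "\<And>i. i \<in> I \<Longrightarrow> 0 \<le> s i"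
  shows "0 \<le> (\<Sum>i\<in>I. \<Sum>j\<in>I. c i * c j * fbm_cov H (s i) (s j))"
proof (rule char_gaussian_variance_nonneg[OF P])
  have [measurable]: "\<And>t. W t \<in> borel_measurable P"
    using fbm by (simp add: is_fbm_def)
  show "(\<lambda>\<omega>. \<Sum>i\<in>I. c i * W (s i) \<omega>) \<in> borel_measurable P"
    by measurable
qed (use is_fbm_char_sum[OF fbm I s] in simp)

definition fbm_incr_cov :: "real \<Rightarrow> real \<Rightarrow> real \<Rightarrow> real \<Rightarrow> real" where
  "fbm_incr_cov H b p q = fbm_cov H b b - fbm_cov H b q - fbm_cov H p b + fbm_cov H p q"

text \<open>A combination \<open>\<Sum>j\<in>J. d j * (W b - W (p j))\<close> of increments is encoded as a combination
  of values of \<open>W\<close> indexed by \<open>J \<times> UNIV\<close>, so that the Gaussian law in \<^const>\<open>is_fbm\<close> applies to it.\<close>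

definition incr_coeff :: "('j \<Rightarrow> real) \<Rightarrow> 'j \<times> bool \<Rightarrow> real" where
  "incr_coeff d i = (if snd i then d (fst i) else - d (fst i))"

definition incr_time :: "real \<Rightarrow> ('j \<Rightarrow> real) \<Rightarrow> 'j \<times> bool \<Rightarrow> real" where
  "incr_time b p i = (if snd i then b else p (fst i))"

lemma sum_times_UNIV_bool:
  "finite J \<Longrightarrow> (\<Sum>i\<in>J \<times> UNIV. f i) = (\<Sum>j\<in>J. f (j, True) + f (j, False))"
  using sum.cartesian_product[of "\<lambda>j b. f (j, b)" UNIV J] by (simp add: UNIV_bool add.commute)

lemma incr_combination_eq:
  "finite J \<Longrightarrow> (\<Sum>i\<in>J \<times> UNIV. incr_coeff d i * W (incr_time b p i) \<omega>)
     = (\<Sum>j\<in>J. d j * (W b \<omega> - W (p j) \<omega>))"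
  by (simp add: sum_times_UNIV_bool incr_coeff_def incr_time_def algebra_simps)

lemma incr_quadratic_form_eq:
  "finite J \<Longrightarrow>
    (\<Sum>i\<in>J \<times> UNIV. \<Sum>i'\<in>J \<times> UNIV.
       incr_coeff d i * incr_coeff d i' * fbm_cov H (incr_time b p i) (incr_time b p i'))
     = (\<Sum>j\<in>J. \<Sum>l\<in>J. d j * d l * fbm_incr_cov H b (p j) (p l))"
  by (simp add: sum_times_UNIV_bool incr_coeff_def incr_time_def fbm_incr_cov_def
      sum.distrib[symmetric] sum_subtractf[symmetric] algebra_simps)

lemma is_fbm_incr_char:
  fixes W :: "real \<Rightarrow> 'a \<Rightarrow> real"
  assumes fbm: "is_fbm P H W" and J: "finite J" and b: "0 \<le> b" and p: "\<And>j. j \<in> J \<Longrightarrow> 0 \<le> p j"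
  shows "char (distr P borel (\<lambda>\<omega>. \<Sum>j\<in>J. d j * (W b \<omega> - W (p j) \<omega>))) u =
    complex_of_real (exp (- (u^2 * (\<Sum>j\<in>J. \<Sum>l\<in>J. d j * d l * fbm_incr_cov H b (p j) (p l))) / 2))"
proof -
  have "\<And>i. i \<in> J \<times> UNIV \<Longrightarrow> 0 \<le> incr_time b p i"
    using b p by (auto simp: incr_time_def)
  then show ?thesis
    using is_fbm_char_sum[OF fbm, of "J \<times> UNIV" "incr_time b p" "incr_coeff d" u] J
    by (simp add: incr_combination_eq incr_quadratic_form_eq)
qed

lemma is_fbm_incr_quadratic_form_nonneg:
  fixes W :: "real \<Rightarrow> 'a \<Rightarrow> real"
  assumes P: "prob_space P" and fbm: "is_fbm P H W"
    and J: "finite J" and b: "0 \<le> b" and p: "\<And>j. j \<in> J \<Longrightarrow> 0 \<le> p j"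
  shows "0 \<le> (\<Sum>j\<in>J. \<Sum>l\<in>J. d j * d l * fbm_incr_cov H b (p j) (p l))"
proof -
  have "\<And>i. i \<in> J \<times> UNIV \<Longrightarrow> 0 \<le> incr_time b p i"
    using b p by (auto simp: incr_time_def)
  then show ?thesis
    using is_fbm_quadratic_form_nonneg[OF P fbm, of "J \<times> UNIV" "incr_time b p" "incr_coeff d"] J
    by (simp add: incr_quadratic_form_eq)
qed

lemma fbm_incr_cov_commute: "fbm_incr_cov H b q p = fbm_incr_cov H b p q"
  by (simp add: fbm_incr_cov_def fbm_cov_def abs_minus_commute add.commute)

lemma fbm_incr_cov_diag: "fbm_incr_cov H b p p = \<bar>b - p\<bar> powr H * \<bar>b - p\<bar> powr H"
  by (simp add: fbm_incr_cov_def fbm_cov_def abs_minus_commute field_simps flip: powr_add)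

lemma discriminant_le_of_quadratic_form_nonneg:
  fixes A B C :: real
  assumes nonneg: "\<And>x y. 0 \<le> x^2 * A + 2 * x * y * B + y^2 * C"
  shows "B^2 \<le> A * C"
proof (cases "C = 0")
  case True
  have "B = 0"
  proof (rule ccontr)
    assume "B \<noteq> 0"
    with True nonneg[of 1 "- (A + 1) / (2 * B)"] show False by (simp add: field_simps)
  qed
  then show ?thesis using nonneg[of 1 0] True by simp
next
  case False
  then have "0 < C" using nonneg[of 0 1] by simp
  moreover have "0 \<le> C * (A * C - B^2)"
    using nonneg[of C "- B"] by (simp add: algebra_simps power2_eq_square)
  ultimately show ?thesis by (simp add: zero_le_mult_iff)
qed

lemma fbm_incr_cov_abs_le:
  fixes W :: "real \<Rightarrow> 'a \<Rightarrow> real"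
  assumes P: "prob_space P" and fbm: "is_fbm P H W" and "0 \<le> b" "0 \<le> p" "0 \<le> q"
  shows "\<bar>fbm_incr_cov H b p q\<bar> \<le> \<bar>b - p\<bar> powr H * \<bar>b - q\<bar> powr H"
proof -
  have "(fbm_incr_cov H b p q)^2 \<le> fbm_incr_cov H b p p * fbm_incr_cov H b q q"
  proof (rule discriminant_le_of_quadratic_form_nonneg)
    fix x y :: real
    let ?d = "\<lambda>j::bool. if j then x else y" and ?p = "\<lambda>j::bool. if j then p else q"
    have "0 \<le> (\<Sum>j\<in>UNIV. \<Sum>l\<in>UNIV. ?d j * ?d l * fbm_incr_cov H b (?p j) (?p l))"
      by (rule is_fbm_incr_quadratic_form_nonneg[OF P fbm]) (use assms in auto)
    then show "0 \<le> x\<^sup>2 * fbm_incr_cov H b p p + 2 * x * y * fbm_incr_cov H b p q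
        + y\<^sup>2 * fbm_incr_cov H b q q"
      by (simp add: UNIV_bool fbm_incr_cov_commute power2_eq_square algebra_simps)
  qed
  also have "\<dots> = (\<bar>b - p\<bar> powr H * \<bar>b - q\<bar> powr H)^2"
    by (simp add: fbm_incr_cov_diag power2_eq_square)
  finally have "\<bar>fbm_incr_cov H b p q\<bar> \<le> \<bar>\<bar>b - p\<bar> powr H * \<bar>b - q\<bar> powr H\<bar>"
    by (simp only: abs_le_square_iff)
  then show ?thesis by simp
qed

lemma fbm_incr_quadratic_form_le:
  fixes W :: "real \<Rightarrow> 'a \<Rightarrow> real"
  assumes P: "prob_space P" and fbm: "is_fbm P H W"
    and b: "0 \<le> b" and p: "\<And>j. j \<in> J \<Longrightarrow> 0 \<le> p j"
  shows "(\<Sum>j\<in>J. \<Sum>l\<in>J. d j * d l * fbm_incr_cov H b (p j) (p l))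
    \<le> (\<Sum>j\<in>J. \<bar>d j\<bar> * \<bar>b - p j\<bar> powr H)^2"
proof -
  have "d j * d l * fbm_incr_cov H b (p j) (p l)
      \<le> (\<bar>d j\<bar> * \<bar>b - p j\<bar> powr H) * (\<bar>d l\<bar> * \<bar>b - p l\<bar> powr H)"
    if "j \<in> J" "l \<in> J" for j l
  proof -
    have "d j * d l * fbm_incr_cov H b (p j) (p l) \<le> \<bar>d j * d l\<bar> * \<bar>fbm_incr_cov H b (p j) (p l)\<bar>"
      by (metis abs_ge_self abs_mult)
    also have "\<dots> \<le> \<bar>d j * d l\<bar> * (\<bar>b - p j\<bar> powr H * \<bar>b - p l\<bar> powr H)"
      using that by (intro mult_left_mono fbm_incr_cov_abs_le[OF P fbm b]) (auto intro: p)
    finally show ?thesis by (simp add: abs_mult algebra_simps)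
  qed
  then have "(\<Sum>j\<in>J. \<Sum>l\<in>J. d j * d l * fbm_incr_cov H b (p j) (p l))
      \<le> (\<Sum>j\<in>J. \<Sum>l\<in>J. (\<bar>d j\<bar> * \<bar>b - p j\<bar> powr H) * (\<bar>d l\<bar> * \<bar>b - p l\<bar> powr H))"
    by (intro sum_mono) auto
  then show ?thesis
    by (simp add: power2_eq_square sum_product)
qed

lemma indep_fbm_incr_sum_fourth_moment_le:
  fixes P :: "'a measure" and W :: "'k \<Rightarrow> real \<Rightarrow> 'a \<Rightarrow> real"
  assumes P: "prob_space P" and fbm: "\<And>k. is_fbm P H (W k)"
    and ind: "prob_space.indep_vars P (\<lambda>_. Pi\<^sub>M UNIV (\<lambda>_. borel)) (\<lambda>k \<omega> t. W k t \<omega>) UNIV"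
    and K: "finite K" and J: "finite J" and b: "0 \<le> b" and p: "\<And>j. j \<in> J \<Longrightarrow> 0 \<le> p j"
  shows "(\<integral>\<^sup>+\<omega>. ennreal ((\<Sum>k\<in>K. \<Sum>j\<in>J. c k j * (W k b \<omega> - W k (p j) \<omega>)) ^ 4) \<partial>P)
    \<le> ennreal (3 * (\<Sum>k\<in>K. (\<Sum>j\<in>J. \<bar>c k j\<bar> * \<bar>b - p j\<bar> powr H)^2)^2)"
proof -
  interpret prob_space P by fact
  have [measurable]: "\<And>k t. W k t \<in> borel_measurable P"
    using fbm by (simp add: is_fbm_def)
  define F where "F k w = (\<Sum>j\<in>J. c k j * (w b - w (p j)))" for k and w :: "real \<Rightarrow> real"
  define V where "V k = (\<Sum>j\<in>J. \<Sum>l\<in>J. c k j * c k l * fbm_incr_cov H b (p j) (p l))" for k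
  have "indep_vars (\<lambda>_. borel) (\<lambda>k \<omega>. F k (\<lambda>t. W k t \<omega>)) UNIV"
    by (rule indep_vars_compose2[OF ind]) (simp add: F_def)
  then have indK: "indep_vars (\<lambda>_. borel) (\<lambda>k \<omega>. F k (\<lambda>t. W k t \<omega>)) K"
    by (rule indep_vars_subset) simp
  have "char (distr P borel (\<lambda>\<omega>. \<Sum>k\<in>K. F k (\<lambda>t. W k t \<omega>))) u
      = complex_of_real (exp (- (u^2 * (\<Sum>k\<in>K. V k)) / 2))" for u
  proof -
    have "char (distr P borel (\<lambda>\<omega>. \<Sum>k\<in>K. F k (\<lambda>t. W k t \<omega>))) u
        = (\<Prod>k\<in>K. char (distr P borel (\<lambda>\<omega>. F k (\<lambda>t. W k t \<omega>))) u)"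
      using indK by (rule char_distr_sum)
    also have "\<dots> = (\<Prod>k\<in>K. complex_of_real (exp (- (u^2 * V k) / 2)))"
      unfolding F_def V_def by (intro prod.cong refl is_fbm_incr_char[OF fbm J b p])
    also have "\<dots> = complex_of_real (exp (\<Sum>k\<in>K. - (u^2 * V k) / 2))"
      using K by (simp add: exp_sum)
    also have "(\<Sum>k\<in>K. - (u^2 * V k) / 2) = - (u^2 * (\<Sum>k\<in>K. V k)) / 2"
      by (simp add: sum_distrib_left sum_negf flip: sum_divide_distrib)
    finally show ?thesis .
  qed
  then have "(\<integral>\<^sup>+\<omega>. ennreal ((\<Sum>k\<in>K. F k (\<lambda>t. W k t \<omega>)) ^ 4) \<partial>P) = ennreal (3 * (\<Sum>k\<in>K. V k)^2)"
    by (intro gaussian_fourth_moment[OF P]) (auto simp: F_def)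
  moreover have "(\<Sum>k\<in>K. V k)^2 \<le> (\<Sum>k\<in>K. (\<Sum>j\<in>J. \<bar>c k j\<bar> * \<bar>b - p j\<bar> powr H)^2)^2"
  proof (intro power_mono sum_mono sum_nonneg)
    show "V k \<le> (\<Sum>j\<in>J. \<bar>c k j\<bar> * \<bar>b - p j\<bar> powr H)^2" for k
      unfolding V_def by (rule fbm_incr_quadratic_form_le[OF P fbm b p])
    show "0 \<le> V k" for k
      unfolding V_def by (rule is_fbm_incr_quadratic_form_nonneg[OF P fbm J b p])
  qed
  ultimately show ?thesis
    by (simp add: F_def ennreal_leI)
qed

lemma indep_fbm_mode_sum_fourth_moment_le:
  fixes P :: "'a measure" and W :: "nat \<Rightarrow> real \<Rightarrow> 'a \<Rightarrow> real"
  assumes P: "prob_space P" and fbm: "\<And>k. is_fbm P H (W k)"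
    and ind: "prob_space.indep_vars P (\<lambda>_. Pi\<^sub>M UNIV (\<lambda>_. borel)) (\<lambda>k \<omega> t. W k t \<omega>) UNIV"
    and J: "finite J" and b: "0 \<le> b" and p: "\<And>j. j \<in> J \<Longrightarrow> 0 \<le> p j"
    and B: "\<And>k. k \<in> {1..N} \<Longrightarrow> (\<Sum>j\<in>J. \<bar>d k j\<bar> * \<bar>b - p j\<bar> powr H) \<le> B k"
  shows "(\<integral>\<^sup>+\<omega>. ennreal ((\<Sum>k=1..N. \<Sum>j\<in>J. phi k x * d k j * (W k b \<omega> - W k (p j) \<omega>))^4) \<partial>P)
    \<le> ennreal (12 * (\<Sum>k=1..N. (B k)^2)^2)"
proof -
  have B_phi: "(\<Sum>j\<in>J. \<bar>phi k x * d k j\<bar> * \<bar>b - p j\<bar> powr H)^2 \<le> 2 * (B k)^2"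
    if "k \<in> {1..N}" for k
  proof -
    have "0 \<le> (\<Sum>j\<in>J. \<bar>d k j\<bar> * \<bar>b - p j\<bar> powr H)"
      by (rule sum_nonneg) simp
    then have "(\<Sum>j\<in>J. \<bar>d k j\<bar> * \<bar>b - p j\<bar> powr H)^2 \<le> (B k)^2"
      using B[OF that] by (intro power_mono)
    moreover have "(phi k x)^2 \<le> 2"
      using abs_square_le_1[of "sin (real k * pi * x)"] by (simp add: phi_def power_mult_distrib)
    moreover have "(\<Sum>j\<in>J. \<bar>phi k x * d k j\<bar> * \<bar>b - p j\<bar> powr H)^2
        = (phi k x)^2 * (\<Sum>j\<in>J. \<bar>d k j\<bar> * \<bar>b - p j\<bar> powr H)^2"
      by (simp add: abs_mult mult.assoc power_mult_distrib flip: sum_distrib_left)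
    ultimately show ?thesis
      by (simp add: mult_mono)
  qed
  have "(\<integral>\<^sup>+\<omega>. ennreal ((\<Sum>k=1..N. \<Sum>j\<in>J. phi k x * d k j * (W k b \<omega> - W k (p j) \<omega>))^4) \<partial>P)
      \<le> ennreal (3 * (\<Sum>k=1..N. (\<Sum>j\<in>J. \<bar>phi k x * d k j\<bar> * \<bar>b - p j\<bar> powr H)^2)^2)"
    by (rule indep_fbm_incr_sum_fourth_moment_le[OF P fbm ind _ J b p]) auto
  also have "\<dots> \<le> ennreal (3 * (\<Sum>k=1..N. 2 * (B k)^2)^2)"
    using B_phi by (intro ennreal_leI mult_left_mono power_mono sum_mono sum_nonneg) auto
  also have "\<dots> = ennreal (12 * (\<Sum>k=1..N. (B k)^2)^2)"
    by (simp add: power_mult_distrib flip: sum_distrib_left)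
  finally show ?thesis .
qed

section \<open>Fourth moments in \<open>L\<^sup>4\<close> via Fatou and Tonelli\<close>

lemma nn_integral_le_of_tendsto:
  fixes f :: "nat \<Rightarrow> 'a \<Rightarrow> ennreal"
  assumes [measurable]: "\<And>n. f n \<in> borel_measurable M"
    and lim: "\<And>x. x \<in> space M \<Longrightarrow> (\<lambda>n. f n x) \<longlonglongrightarrow> g x"
    and bound: "\<And>n. (\<integral>\<^sup>+x. f n x \<partial>M) \<le> C"
  shows "(\<integral>\<^sup>+x. g x \<partial>M) \<le> C"
proof -
  have "(\<integral>\<^sup>+x. g x \<partial>M) = (\<integral>\<^sup>+x. liminf (\<lambda>n. f n x) \<partial>M)"
  proof (intro nn_integral_cong)
    fix x assume "x \<in> space M"
    show "g x = liminf (\<lambda>n. f n x)"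
      using lim_imp_Liminf[OF _ lim[OF \<open>x \<in> space M\<close>]] by simp
  qed
  also have "\<dots> \<le> liminf (\<lambda>n. \<integral>\<^sup>+x. f n x \<partial>M)"
    by (rule nn_integral_liminf) simp
  also have "\<dots> \<le> limsup (\<lambda>n. \<integral>\<^sup>+x. f n x \<partial>M)"
    by (rule Liminf_le_Limsup) simp
  also have "\<dots> \<le> C"
    using bound by (intro Limsup_bounded) simp
  finally show ?thesis .
qed

lemma nn_integral_L4pow4_le:
  fixes \<Theta> :: "real \<Rightarrow> 'a \<Rightarrow> real"
  assumes P: "prob_space P"
    and [measurable]: "(\<lambda>(x, \<omega>). \<Theta> x \<omega>) \<in> borel_measurable (lborel \<Otimes>\<^sub>M P)"
    and cont: "\<And>\<omega>. continuous_on {0..1} (\<lambda>x. \<Theta> x \<omega>)"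
    and bound: "\<And>x. x \<in> {0..1} \<Longrightarrow> (\<integral>\<^sup>+\<omega>. ennreal ((\<Theta> x \<omega>)^4) \<partial>P) \<le> C"
  shows "(\<integral>\<^sup>+\<omega>. ennreal (L4pow4 (\<lambda>x. \<Theta> x \<omega>)) \<partial>P) \<le> C"
proof -
  interpret prob_space P by fact
  interpret pair_sigma_finite lborel P ..
  have "ennreal (L4pow4 (\<lambda>x. \<Theta> x \<omega>)) = (\<integral>\<^sup>+x. ennreal (indicator {0..1} x * (\<Theta> x \<omega>)^4) \<partial>lborel)" for \<omega>
  proof -
    have "continuous_on {0..1} (\<lambda>x. (\<Theta> x \<omega>)^4)"
      by (intro continuous_intros cont)
    then have "((\<lambda>x. (\<Theta> x \<omega>)^4) has_integral integral {0..1} (\<lambda>x. (\<Theta> x \<omega>)^4)) {0..1}"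
      by (intro integrable_integral integrable_continuous_interval)
    moreover have "L4pow4 (\<lambda>x. \<Theta> x \<omega>) = integral {0..1} (\<lambda>x. (\<Theta> x \<omega>)^4)"
      by (simp add: L4pow4_def)
    ultimately show ?thesis
      by (intro nn_integral_has_integral_lebesgue[symmetric]) auto
  qed
  then have "(\<integral>\<^sup>+\<omega>. ennreal (L4pow4 (\<lambda>x. \<Theta> x \<omega>)) \<partial>P)
      = (\<integral>\<^sup>+\<omega>. (\<integral>\<^sup>+x. ennreal (indicator {0..1} x * (\<Theta> x \<omega>)^4) \<partial>lborel) \<partial>P)"
    by simp
  also have "\<dots> = (\<integral>\<^sup>+x. (\<integral>\<^sup>+\<omega>. ennreal (indicator {0..1} x * (\<Theta> x \<omega>)^4) \<partial>P) \<partial>lborel)"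
    by (rule Fubini') measurable
  also have "\<dots> \<le> (\<integral>\<^sup>+x. C * indicator {0..1::real} x \<partial>lborel)"
  proof (intro nn_integral_mono)
    fix x
    show "(\<integral>\<^sup>+\<omega>. ennreal (indicator {0..1} x * (\<Theta> x \<omega>)^4) \<partial>P) \<le> C * indicator {0..1} x"
      using bound[of x] by (cases "x \<in> {0..1}") auto
  qed
  also have "\<dots> = C"
    by (simp add: nn_integral_cmult_indicator)
  finally show ?thesis .
qed

lemma L4pow4_moment_le_of_incr_sum_limits:
  fixes P :: "'a measure" and W :: "nat \<Rightarrow> real \<Rightarrow> 'a \<Rightarrow> real"
  assumes P: "prob_space P" and fbm: "\<And>k. is_fbm P H (W k)"
    and ind: "prob_space.indep_vars P (\<lambda>_. Pi\<^sub>M UNIV (\<lambda>_. borel)) (\<lambda>k \<omega> t. W k t \<omega>) UNIV"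
    and b: "0 \<le> b" and p: "\<And>n j. 0 \<le> p n j"
    and lim: "\<And>k \<omega>. \<omega> \<in> space P \<Longrightarrow>
      (\<lambda>n. \<Sum>j<Suc n. d k n j * (W k b \<omega> - W k (p n j) \<omega>)) \<longlonglongrightarrow> X k \<omega>"
    and B: "\<And>k n. k \<in> {1..N} \<Longrightarrow> (\<Sum>j<Suc n. \<bar>d k n j\<bar> * \<bar>b - p n j\<bar> powr H) \<le> B k"
  shows "(\<integral>\<^sup>+\<omega>. ennreal (L4pow4 (\<lambda>x. \<Sum>k=1..N. X k \<omega> * phi k x)) \<partial>P)
    \<le> ennreal (12 * (\<Sum>k=1..N. (B k)^2)^2)"
proof -
  interpret prob_space P by fact
  have [measurable]: "\<And>k t. W k t \<in> borel_measurable P"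
    using fbm by (simp add: is_fbm_def)
  have [measurable]: "\<And>k. X k \<in> borel_measurable P"
    by (rule borel_measurable_LIMSEQ_real[OF lim]) measurable
  have [measurable]: "\<And>k. phi k \<in> borel_measurable borel"
    unfolding phi_def by measurable
  define S where "S n x \<omega> = (\<Sum>k=1..N. \<Sum>j<Suc n. phi k x * d k n j * (W k b \<omega> - W k (p n j) \<omega>))"
    for n x \<omega>
  have "(\<integral>\<^sup>+\<omega>. ennreal ((\<Sum>k=1..N. X k \<omega> * phi k x)^4) \<partial>P) \<le> ennreal (12 * (\<Sum>k=1..N. (B k)^2)^2)"
    for x
  proof (rule nn_integral_le_of_tendsto)
    show "(\<integral>\<^sup>+\<omega>. ennreal ((S n x \<omega>)^4) \<partial>P) \<le> ennreal (12 * (\<Sum>k=1..N. (B k)^2)^2)" for n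
      unfolding S_def by (rule indep_fbm_mode_sum_fourth_moment_le[OF P fbm ind finite_lessThan b])
        (auto intro: p B simp del: sum.lessThan_Suc)
    have "S n x \<omega> = (\<Sum>k=1..N. (\<Sum>j<Suc n. d k n j * (W k b \<omega> - W k (p n j) \<omega>)) * phi k x)"
      for n \<omega>
      unfolding S_def sum_distrib_right by (simp add: mult_ac)
    then show "(\<lambda>n. ennreal ((S n x \<omega>)^4)) \<longlonglongrightarrow> ennreal ((\<Sum>k=1..N. X k \<omega> * phi k x)^4)"
      if "\<omega> \<in> space P" for \<omega>
      by (simp only:) (intro tendsto_ennrealI tendsto_power tendsto_sum tendsto_mult_right lim that)
  qed (simp add: S_def)
  then show ?thesis
    using P by (intro nn_integral_L4pow4_le) (auto simp: phi_def intro!: continuous_intros)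
qed

section \<open>Pathwise Wiener integrals as limits of Riemann sums\<close>

lemma integral_split_uniform:
  fixes g :: "real \<Rightarrow> real"
  assumes "continuous_on {a..a + real n * \<Delta>} g" and "0 \<le> \<Delta>"
  shows "integral {a..a + real n * \<Delta>} g = (\<Sum>i<n. integral {a + real i * \<Delta>..a + real (Suc i) * \<Delta>} g)"
  using assms(1)
proof (induction n)
  case (Suc n)
  have "continuous_on {a..a + real n * \<Delta>} g"
    by (rule continuous_on_subset[OF Suc.prems]) (use assms(2) in \<open>auto simp: algebra_simps\<close>)
  note IH = Suc.IH[OF this]
  have "integral {a..a + real n * \<Delta>} g + integral {a + real n * \<Delta>..a + real (Suc n) * \<Delta>} g
      = integral {a..a + real (Suc n) * \<Delta>} g"
    by (rule Henstock_Kurzweil_Integration.integral_combine)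
      (use assms(2) integrable_continuous_interval[OF Suc.prems] in \<open>auto simp: algebra_simps\<close>)
  then show ?case
    using IH by simp
qed simp

lemma left_endpoint_rule_error_le:
  fixes g :: "real \<Rightarrow> real"
  assumes cont: "continuous_on {c..c + \<Delta>} g" and "0 \<le> \<Delta>"
    and osc: "\<And>x. x \<in> {c..c + \<Delta>} \<Longrightarrow> \<bar>g x - g c\<bar> \<le> e"
  shows "\<bar>\<Delta> * g c - integral {c..c + \<Delta>} g\<bar> \<le> e * \<Delta>"
proof -
  have int: "((\<lambda>x. g x - g c) has_integral (integral {c..c + \<Delta>} g - \<Delta> * g c)) {c..c + \<Delta>}"
    using has_integral_diff[OF integrable_integral[OF integrable_continuous_interval[OF cont]]
        has_integral_const_real[of "g c" c "c + \<Delta>"]] \<open>0 \<le> \<Delta>\<close>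
    by (simp add: content_real algebra_simps)
  have "0 \<le> e"
    using osc[of c] \<open>0 \<le> \<Delta>\<close> by simp
  have "\<And>x. x \<in> {c..c + \<Delta>} - {} \<Longrightarrow> norm (g x - g c) \<le> e"
    using osc by simp
  from has_integral_bound_real[OF \<open>0 \<le> e\<close> finite.emptyI int this]
  have "norm (integral {c..c + \<Delta>} g - \<Delta> * g c) \<le> e * \<Delta>"
    using \<open>0 \<le> \<Delta>\<close> by simp
  then show ?thesis
    by (simp add: abs_minus_commute)
qed

lemma riemann_sum_error_le:
  fixes g :: "real \<Rightarrow> real"
  assumes cont: "continuous_on {a..a + real n * \<Delta>} g" and "0 \<le> \<Delta>"
    and osc: "\<And>x y. x \<in> {a..a + real n * \<Delta>} \<Longrightarrow> y \<in> {a..a + real n * \<Delta>} \<Longrightarrow> \<bar>x - y\<bar> \<le> \<Delta>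
      \<Longrightarrow> \<bar>g x - g y\<bar> \<le> e"
  shows "\<bar>(\<Sum>i<n. \<Delta> * g (a + real i * \<Delta>)) - integral {a..a + real n * \<Delta>} g\<bar> \<le> real n * (e * \<Delta>)"
proof -
  have "\<bar>\<Delta> * g (a + real i * \<Delta>) - integral {a + real i * \<Delta>..a + real (Suc i) * \<Delta>} g\<bar> \<le> e * \<Delta>"
    if "i < n" for i
  proof -
    have "real (Suc i) * \<Delta> \<le> real n * \<Delta>"
      using \<open>i < n\<close> \<open>0 \<le> \<Delta>\<close> by (intro mult_right_mono) auto
    then have sub: "{a + real i * \<Delta>..a + real i * \<Delta> + \<Delta>} \<subseteq> {a..a + real n * \<Delta>}"
      using \<open>0 \<le> \<Delta>\<close> by (auto simp: algebra_simps)
    have "\<bar>\<Delta> * g (a + real i * \<Delta>) - integral {a + real i * \<Delta>..a + real i * \<Delta> + \<Delta>} g\<bar> \<le> e * \<Delta>"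
    proof (rule left_endpoint_rule_error_le[OF continuous_on_subset[OF cont sub] \<open>0 \<le> \<Delta>\<close>])
      fix x assume x: "x \<in> {a + real i * \<Delta>..a + real i * \<Delta> + \<Delta>}"
      have "a + real i * \<Delta> \<in> {a + real i * \<Delta>..a + real i * \<Delta> + \<Delta>}"
        using \<open>0 \<le> \<Delta>\<close> by simp
      then show "\<bar>g x - g (a + real i * \<Delta>)\<bar> \<le> e"
        using x by (intro osc subsetD[OF sub]) auto
    qed
    then show ?thesis
      by (simp add: algebra_simps)
  qed
  then have "\<bar>\<Sum>i<n. \<Delta> * g (a + real i * \<Delta>) - integral {a + real i * \<Delta>..a + real (Suc i) * \<Delta>} g\<bar>
      \<le> (\<Sum>i<n. e * \<Delta>)"
    by (intro order_trans[OF sum_abs] sum_mono) auto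
  then show ?thesis
    by (simp add: integral_split_uniform[OF cont \<open>0 \<le> \<Delta>\<close>] sum_subtractf)
qed

lemma riemann_sum_tendsto_integral:
  fixes g :: "real \<Rightarrow> real"
  assumes cont: "continuous_on {a..b} g" and "a < b"
  shows "(\<lambda>n. \<Sum>i<n. (b - a) / real n * g (a + real i * ((b - a) / real n))) \<longlonglongrightarrow> integral {a..b} g"
proof (rule LIMSEQ_I)
  fix e :: real assume "0 < e"
  define e' where "e' = e / (2 * (b - a))"
  have "0 < e'" using \<open>0 < e\<close> \<open>a < b\<close> by (simp add: e'_def)
  then obtain d where "0 < d"
    and d: "\<And>x y. x \<in> {a..b} \<Longrightarrow> y \<in> {a..b} \<Longrightarrow> dist y x < d \<Longrightarrow> dist (g y) (g x) < e'"
    using compact_uniformly_continuous[OF cont compact_Icc]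
    unfolding uniformly_continuous_on_def by metis
  obtain N :: nat where N: "(b - a) / d < real N"
    using reals_Archimedean2 by blast
  have "norm ((\<Sum>i<n. (b - a) / real n * g (a + real i * ((b - a) / real n))) - integral {a..b} g) < e"
    if "N < n" for n
  proof -
    define \<Delta> where "\<Delta> = (b - a) / real n"
    have "0 < real n"
      using \<open>N < n\<close> by simp
    then have "0 < \<Delta>" and b: "a + real n * \<Delta> = b"
      using \<open>a < b\<close> by (auto simp: \<Delta>_def)
    have "(b - a) / d < real n"
      using N \<open>N < n\<close> by linarith
    then have "\<Delta> < d"
      using \<open>0 < d\<close> \<open>0 < real n\<close> by (simp add: \<Delta>_def pos_divide_less_eq mult.commute)
    then have "\<bar>g x - g y\<bar> \<le> e'" if "x \<in> {a..b}" "y \<in> {a..b}" "\<bar>x - y\<bar> \<le> \<Delta>" for x y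
      using d[OF that(2,1)] that(3) by (simp add: dist_real_def)
    then have "\<bar>(\<Sum>i<n. \<Delta> * g (a + real i * \<Delta>)) - integral {a..b} g\<bar> \<le> real n * (e' * \<Delta>)"
      using riemann_sum_error_le[of a n \<Delta> g e'] cont \<open>0 < \<Delta>\<close> unfolding b by simp
    also have "\<dots> = e / 2"
      using \<open>a < b\<close> \<open>0 < real n\<close> by (simp add: e'_def \<Delta>_def field_simps)
    finally show ?thesis
      using \<open>0 < e\<close> unfolding \<Delta>_def by simp
  qed
  then show "\<exists>N. \<forall>n\<ge>N. norm ((\<Sum>i<n. (b - a) / real n * g (a + real i * ((b - a) / real n))) - integral {a..b} g) < e"
    using Suc_le_lessD by blast
qed

text \<open>Integrating by parts, \<open>wint f a b w = f a * (w b - w a) + \<integral>\<^sub>a\<^sup>b f' s * (w b - w s) ds\<close>, so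
  its left Riemann sums are combinations of increments \<open>w b - w p\<close>. Slot \<open>j = 0\<close> carries the
  boundary term and slot \<open>j = i + 1\<close> the \<open>i\<close>-th left endpoint.\<close>

definition riemann_node :: "real \<Rightarrow> real \<Rightarrow> nat \<Rightarrow> nat \<Rightarrow> real" where
  "riemann_node a b n j = (if j = 0 then a else a + real (j - 1) * ((b - a) / real n))"

definition riemann_weight :: "(real \<Rightarrow> real) \<Rightarrow> (real \<Rightarrow> real) \<Rightarrow> real \<Rightarrow> real \<Rightarrow> nat \<Rightarrow> nat \<Rightarrow> real" where
  "riemann_weight f f' a b n j = (if j = 0 then f a else (b - a) / real n * f' (riemann_node a b n j))"

lemma wint_eq_boundary_plus_integral:
  fixes W :: "real \<Rightarrow> 'a \<Rightarrow> real"
  assumes "a \<le> b" and f': "\<And>s. (f has_real_derivative f' s) (at s)"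
    and cont_f': "continuous_on {a..b} f'" and cont_W: "continuous_on {a..b} (\<lambda>t. W t \<omega>)"
  shows "wint f a b W \<omega> = f a * (W b \<omega> - W a \<omega>) + integral {a..b} (\<lambda>s. f' s * (W b \<omega> - W s \<omega>))"
proof -
  have "(f' has_integral (f b - f a)) {a..b}"
    using \<open>a \<le> b\<close> f' by (intro fundamental_theorem_of_calculus)
      (auto simp: has_real_derivative_iff_has_vector_derivative[symmetric]
        intro: has_field_derivative_at_within)
  moreover have "f' integrable_on {a..b}" "(\<lambda>s. f' s * W s \<omega>) integrable_on {a..b}"
    by (intro integrable_continuous_interval continuous_intros cont_f' cont_W)+
  ultimately have "integral {a..b} (\<lambda>s. f' s * (W b \<omega> - W s \<omega>))
      = (f b - f a) * W b \<omega> - integral {a..b} (\<lambda>s. f' s * W s \<omega>)"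
    by (simp add: right_diff_distrib integral_diff integrable_on_mult_left integral_mult_left
        integral_unique)
  moreover have "deriv f = f'"
    using f' by (auto intro: DERIV_imp_deriv)
  ultimately show ?thesis
    by (simp add: wint_def algebra_simps)
qed

lemma wint_riemann_tendsto:
  fixes W :: "real \<Rightarrow> 'a \<Rightarrow> real"
  assumes "a \<le> b" and f': "\<And>s. (f has_real_derivative f' s) (at s)"
    and cont_f': "continuous_on {a..b} f'" and cont_W: "continuous_on {a..b} (\<lambda>t. W t \<omega>)"
  shows "(\<lambda>n. \<Sum>j<Suc n. riemann_weight f f' a b n j * (W b \<omega> - W (riemann_node a b n j) \<omega>))
    \<longlonglongrightarrow> wint f a b W \<omega>"
proof -
  define g where "g s = f' s * (W b \<omega> - W s \<omega>)" for s
  have sum_eq: "(\<Sum>j<Suc n. riemann_weight f f' a b n j * (W b \<omega> - W (riemann_node a b n j) \<omega>))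
      = f a * (W b \<omega> - W a \<omega>) + (\<Sum>i<n. (b - a) / real n * g (a + real i * ((b - a) / real n)))" for n
    unfolding sum.lessThan_Suc_shift by (simp add: riemann_weight_def riemann_node_def g_def mult.assoc)
  have wint_eq: "wint f a b W \<omega> = f a * (W b \<omega> - W a \<omega>) + integral {a..b} g"
    unfolding g_def by (rule wint_eq_boundary_plus_integral[of a b f f' W \<omega>, OF assms])
  have "(\<lambda>n. \<Sum>i<n. (b - a) / real n * g (a + real i * ((b - a) / real n)))
      \<longlonglongrightarrow> integral {a..b} g"
  proof (cases "a = b")
    case False
    then show ?thesis
      using \<open>a \<le> b\<close> by (intro riemann_sum_tendsto_integral) (auto simp: g_def intro!: continuous_intros cont_f' cont_W)
  qed simp
  then show ?thesis
    unfolding sum_eq wint_eq by (intro tendsto_add tendsto_const)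
qed

section \<open>Exponential kernels\<close>

lemma powr_mult_exp_neg_le_1:
  fixes x \<gamma> :: real
  assumes "0 \<le> x" and "0 \<le> \<gamma>" and "\<gamma> \<le> 1"
  shows "x powr \<gamma> * exp (- x) \<le> 1"
proof -
  have "x powr \<gamma> \<le> 1 + x"
  proof (cases "x \<le> 1")
    case True
    then have "x powr \<gamma> \<le> 1 powr \<gamma>"
      using assms by (intro powr_mono2) auto
    then show ?thesis using assms by simp
  next
    case False
    then have "x powr \<gamma> \<le> x powr 1"
      using assms by (intro powr_mono) auto
    then show ?thesis using False by simp
  qed
  also have "\<dots> \<le> exp x"
    by (rule exp_ge_add_one_self)
  finally show ?thesis
    by (simp add: exp_minus field_simps)
qed

lemma exp_neg_mult_powr_le:
  fixes l y \<gamma> :: real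
  assumes "0 < l" and "0 \<le> y" and "0 \<le> \<gamma>" and "\<gamma> \<le> 1"
  shows "exp (- l * y) * y powr \<gamma> \<le> l powr (- \<gamma>)"
proof -
  have "y powr \<gamma> = l powr (- \<gamma>) * (l * y) powr \<gamma>"
    using assms by (simp add: powr_mult powr_minus field_simps)
  moreover have "(l * y) powr \<gamma> * exp (- (l * y)) \<le> 1"
    using assms by (intro powr_mult_exp_neg_le_1) auto
  ultimately show ?thesis
    using \<open>0 < l\<close> by (simp add: mult_le_cancel_left1 mult.left_commute mult.commute)
qed

lemma exp_neg_mult_powr_le_half:
  fixes l y \<gamma> :: real
  assumes "0 < l" and "0 \<le> y" and "0 \<le> \<gamma>" and "\<gamma> \<le> 1"
  shows "exp (- l * y) * y powr \<gamma> \<le> 2 * l powr (- \<gamma>) * exp (- l * y / 2)"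
proof -
  have "exp (- l * y) * y powr \<gamma> = exp (- l * y / 2) * (exp (- (l / 2) * y) * y powr \<gamma>)"
    by (simp flip: exp_add)
  also have "\<dots> \<le> exp (- l * y / 2) * (l / 2) powr (- \<gamma>)"
    using assms by (intro mult_left_mono exp_neg_mult_powr_le) auto
  also have "(l / 2) powr (- \<gamma>) = 2 powr \<gamma> * l powr (- \<gamma>)"
    using \<open>0 < l\<close> by (simp add: powr_divide powr_minus field_simps)
  also have "2 powr \<gamma> \<le> 2"
    using powr_mono[of \<gamma> 1 2] \<open>\<gamma> \<le> 1\<close> by simp
  finally show ?thesis
    using \<open>0 < l\<close> by (simp add: mult_ac mult_left_mono)
qed

lemma sum_exp_neg_le_inverse:
  fixes u :: real
  assumes "0 < u"
  shows "(\<Sum>i<n. exp (- u * (real n - real i))) \<le> 1 / u"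
proof (induction n)
  case (Suc n)
  have "(\<Sum>i<Suc n. exp (- u * (real (Suc n) - real i)))
      = exp (- u) * ((\<Sum>i<n. exp (- u * (real n - real i))) + 1)"
    by (simp add: sum_distrib_left algebra_simps flip: exp_add)
  also have "\<dots> \<le> exp (- u) * (1 / u + 1)"
    using Suc.IH by (intro mult_left_mono) auto
  also have "\<dots> = exp (- u) * (1 + u) / u"
    using assms by (simp add: field_simps)
  also have "\<dots> \<le> 1 / u"
    using exp_ge_add_one_self[of u] assms by (intro divide_right_mono) (auto simp: exp_minus field_simps)
  finally show ?case .
qed (use assms in simp)

definition exp_kernel :: "real \<Rightarrow> real \<Rightarrow> real \<Rightarrow> real \<Rightarrow> real" where
  "exp_kernel A l b s = A * exp (- l * (b - s))"

lemma exp_kernel_has_real_derivative: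
  "(exp_kernel A l b has_real_derivative l * exp_kernel A l b s) (at s)"
  unfolding exp_kernel_def by (auto intro!: derivative_eq_intros)

text \<open>Half of the exponential absorbs the power of \<open>y\<close>, the other half makes the sum geometric.\<close>

lemma sum_grid_exp_neg_powr_le:
  fixes l \<Delta> M \<gamma> :: real
  assumes "0 < l" and "0 < \<Delta>" and "0 \<le> \<gamma>" and "\<gamma> \<le> 1" and "0 \<le> M"
    and HM: "\<And>y. 0 \<le> y \<Longrightarrow> y \<le> real n * \<Delta> \<Longrightarrow> y powr H \<le> M * y powr \<gamma>"
  shows "(\<Sum>i<n. \<Delta> * l * (exp (- l * ((real n - real i) * \<Delta>)) * ((real n - real i) * \<Delta>) powr H))
    \<le> 4 * M * l powr (- \<gamma>)"
proof -
  have "\<Delta> * l * (exp (- l * ((real n - real i) * \<Delta>)) * ((real n - real i) * \<Delta>) powr H)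
      \<le> \<Delta> * l * (M * (2 * l powr (- \<gamma>) * exp (- (l * \<Delta> / 2) * (real n - real i))))"
    if "i < n" for i
  proof -
    define y where "y = (real n - real i) * \<Delta>"
    have "0 \<le> y" "y \<le> real n * \<Delta>"
      using that \<open>0 < \<Delta>\<close> by (auto simp: y_def intro: mult_right_mono)
    then have "exp (- l * y) * y powr H \<le> M * (exp (- l * y) * y powr \<gamma>)"
      using HM by (simp add: mult.left_commute mult_left_mono)
    also have "\<dots> \<le> M * (2 * l powr (- \<gamma>) * exp (- l * y / 2))"
      using exp_neg_mult_powr_le_half[OF \<open>0 < l\<close> \<open>0 \<le> y\<close> \<open>0 \<le> \<gamma>\<close> \<open>\<gamma> \<le> 1\<close>] \<open>0 \<le> M\<close>
      by (rule mult_left_mono)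
    also have "- l * y / 2 = - (l * \<Delta> / 2) * (real n - real i)"
      by (simp add: y_def)
    finally show ?thesis
      using \<open>0 < l\<close> \<open>0 < \<Delta>\<close> by (simp add: y_def mult_left_mono)
  qed
  then have "(\<Sum>i<n. \<Delta> * l * (exp (- l * ((real n - real i) * \<Delta>)) * ((real n - real i) * \<Delta>) powr H))
      \<le> (\<Sum>i<n. \<Delta> * l * (M * (2 * l powr (- \<gamma>) * exp (- (l * \<Delta> / 2) * (real n - real i)))))"
    by (intro sum_mono) simp
  also have "\<dots> = \<Delta> * l * M * 2 * l powr (- \<gamma>) * (\<Sum>i<n. exp (- (l * \<Delta> / 2) * (real n - real i)))"
    by (simp add: sum_distrib_left mult_ac)
  also have "\<dots> \<le> \<Delta> * l * M * 2 * l powr (- \<gamma>) * (1 / (l * \<Delta> / 2))"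
    using assms by (intro mult_left_mono sum_exp_neg_le_inverse) auto
  also have "\<dots> = 4 * M * l powr (- \<gamma>)"
    using assms by (simp add: field_simps)
  finally show ?thesis .
qed

lemma exp_kernel_riemann_bound:
  fixes l a b M \<gamma> :: real
  assumes "0 < l" and "a \<le> b" and "0 \<le> \<gamma>" and "\<gamma> \<le> 1" and "0 \<le> M"
    and HM: "\<And>y. 0 \<le> y \<Longrightarrow> y \<le> b - a \<Longrightarrow> y powr H \<le> M * y powr \<gamma>"
  shows "(\<Sum>j<Suc n. \<bar>riemann_weight (exp_kernel A l b) (\<lambda>s. l * exp_kernel A l b s) a b n j\<bar>
      * \<bar>b - riemann_node a b n j\<bar> powr H) \<le> 5 * M * \<bar>A\<bar> * l powr (- \<gamma>)"
proof -
  define \<Delta> where "\<Delta> = (b - a) / real n"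
  define w where "w = riemann_weight (exp_kernel A l b) (\<lambda>s. l * exp_kernel A l b s) a b n"
  have "\<bar>w 0\<bar> * \<bar>b - riemann_node a b n 0\<bar> powr H = \<bar>A\<bar> * (exp (- l * (b - a)) * (b - a) powr H)"
    using \<open>a \<le> b\<close> by (simp add: w_def riemann_weight_def riemann_node_def exp_kernel_def abs_mult)
  also have "\<dots> \<le> \<bar>A\<bar> * (M * (exp (- l * (b - a)) * (b - a) powr \<gamma>))"
    using HM[of "b - a"] \<open>a \<le> b\<close> by (intro mult_left_mono) (auto simp: mult.left_commute)
  also have "\<dots> \<le> \<bar>A\<bar> * (M * l powr (- \<gamma>))"
    using exp_neg_mult_powr_le[of l "b - a" \<gamma>] assms by (intro mult_left_mono) auto
  finally have boundary: "\<bar>w 0\<bar> * \<bar>b - riemann_node a b n 0\<bar> powr H \<le> M * \<bar>A\<bar> * l powr (- \<gamma>)"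
    by (simp add: mult_ac)
  have interior: "(\<Sum>i<n. \<bar>w (Suc i)\<bar> * \<bar>b - riemann_node a b n (Suc i)\<bar> powr H)
      \<le> \<bar>A\<bar> * (4 * M * l powr (- \<gamma>))"
  proof (cases "0 < \<Delta>")
    case False
    moreover have "0 \<le> \<Delta>"
      using \<open>a \<le> b\<close> by (simp add: \<Delta>_def)
    ultimately have "\<Delta> = 0"
      by simp
    then show ?thesis
      using assms by (simp add: w_def riemann_weight_def flip: \<Delta>_def)
  next
    case True
    then have "0 < real n" and "real n * \<Delta> = b - a"
      by (cases "n = 0"; simp add: \<Delta>_def)+
    have "\<bar>w (Suc i)\<bar> * \<bar>b - riemann_node a b n (Suc i)\<bar> powr H
        = \<bar>A\<bar> * (\<Delta> * l * (exp (- l * ((real n - real i) * \<Delta>)) * ((real n - real i) * \<Delta>) powr H))"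
      if "i < n" for i
    proof -
      have "b - riemann_node a b n (Suc i) = (real n - real i) * \<Delta>"
        using \<open>real n * \<Delta> = b - a\<close> by (simp add: riemann_node_def algebra_simps flip: \<Delta>_def)
      moreover have "w (Suc i) = \<Delta> * (l * (A * exp (- l * (b - riemann_node a b n (Suc i)))))"
        by (simp add: w_def riemann_weight_def exp_kernel_def flip: \<Delta>_def)
      moreover have "0 \<le> real n - real i"
        using that by simp
      ultimately show ?thesis
        using True \<open>0 < l\<close> by (simp add: abs_mult mult_ac)
    qed
    then have "(\<Sum>i<n. \<bar>w (Suc i)\<bar> * \<bar>b - riemann_node a b n (Suc i)\<bar> powr H)
        = \<bar>A\<bar> * (\<Sum>i<n. \<Delta> * l * (exp (- l * ((real n - real i) * \<Delta>)) * ((real n - real i) * \<Delta>) powr H))"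
      by (simp add: sum_distrib_left)
    also have "\<dots> \<le> \<bar>A\<bar> * (4 * M * l powr (- \<gamma>))"
      using \<open>real n * \<Delta> = b - a\<close> True assms
      by (intro mult_left_mono sum_grid_exp_neg_powr_le) auto
    finally show ?thesis .
  qed
  show ?thesis
    using boundary interior unfolding w_def[symmetric] sum.lessThan_Suc_shift by (simp add: algebra_simps)
qed

lemma wint_exp_kernel_L4_moment_le:
  fixes P :: "'a measure" and W :: "nat \<Rightarrow> real \<Rightarrow> 'a \<Rightarrow> real"
  assumes P: "prob_space P" and fbm: "\<And>k. is_fbm P H (W k)"
    and ind: "prob_space.indep_vars P (\<lambda>_. Pi\<^sub>M UNIV (\<lambda>_. borel)) (\<lambda>k \<omega> t. W k t \<omega>) UNIV"
    and "0 \<le> a" and "a \<le> b" and "0 \<le> \<gamma>" and "\<gamma> \<le> 1" and "0 \<le> M"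
    and HM: "\<And>y. 0 \<le> y \<Longrightarrow> y \<le> b - a \<Longrightarrow> y powr H \<le> M * y powr \<gamma>"
    and B: "\<And>k. k \<in> {1..N} \<Longrightarrow> 5 * M * \<bar>A k\<bar> * lam k powr (- \<gamma>) \<le> B k"
  shows "(\<integral>\<^sup>+\<omega>. ennreal (L4pow4 (\<lambda>x. \<Sum>k=1..N. wint (exp_kernel (A k) (lam k) b) a b (W k) \<omega> * phi k x)) \<partial>P)
    \<le> ennreal (12 * (\<Sum>k=1..N. (B k)^2)^2)"
proof (rule L4pow4_moment_le_of_incr_sum_limits[OF P fbm ind, where p = "riemann_node a b"
      and d = "\<lambda>k. riemann_weight (exp_kernel (A k) (lam k) b) (\<lambda>s. lam k * exp_kernel (A k) (lam k) b s) a b"])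
  fix k \<omega> assume "\<omega> \<in> space P"
  then have "continuous_on {a..b} (\<lambda>t. W k t \<omega>)"
    using fbm[of k] \<open>0 \<le> a\<close> by (auto simp: is_fbm_def intro: continuous_on_subset)
  then show "(\<lambda>n. \<Sum>j<Suc n. riemann_weight (exp_kernel (A k) (lam k) b) (\<lambda>s. lam k * exp_kernel (A k) (lam k) b s) a b n j
      * (W k b \<omega> - W k (riemann_node a b n j) \<omega>)) \<longlonglongrightarrow> wint (exp_kernel (A k) (lam k) b) a b (W k) \<omega>"
    using \<open>a \<le> b\<close> by (intro wint_riemann_tendsto exp_kernel_has_real_derivative)
      (auto simp: exp_kernel_def intro!: continuous_intros)
next
  fix k n assume k: "k \<in> {1..N}"
  then have "0 < lam k"
    by (simp add: lam_def)
  then show "(\<Sum>j<Suc n. \<bar>riemann_weight (exp_kernel (A k) (lam k) b) (\<lambda>s. lam k * exp_kernel (A k) (lam k) b s) a b n j\<bar>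
      * \<bar>b - riemann_node a b n j\<bar> powr H) \<le> B k"
    using exp_kernel_riemann_bound[OF _ \<open>a \<le> b\<close> \<open>0 \<le> \<gamma>\<close> \<open>\<gamma> \<le> 1\<close> \<open>0 \<le> M\<close> HM] B[OF k] by (meson order_trans)
qed (use \<open>0 \<le> a\<close> \<open>a \<le> b\<close> in \<open>auto simp: riemann_node_def\<close>)

section \<open>Moment bounds for \<open>Theta1\<close> and \<open>Theta2\<close>\<close>

lemma kappa_bounds:
  assumes "0 < \<tau>" and "0 \<le> t"
  shows "0 \<le> kappa \<tau> t" and "kappa \<tau> t \<le> t" and "t - kappa \<tau> t \<le> \<tau>"
proof -
  have "\<tau> * real_of_int \<lfloor>t / \<tau>\<rfloor> \<le> \<tau> * (t / \<tau>)"
    using assms by (intro mult_left_mono) auto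
  then show "kappa \<tau> t \<le> t"
    using assms by (simp add: kappa_def)
  have "t / \<tau> < real_of_int \<lfloor>t / \<tau>\<rfloor> + 1"
    by linarith
  then show "t - kappa \<tau> t \<le> \<tau>"
    using assms by (simp add: kappa_def field_simps)
  show "0 \<le> kappa \<tau> t"
    using assms by (simp add: kappa_def)
qed

lemma abs_exp_neg_minus_1_le_powr:
  fixes l \<delta> \<tau> \<beta> :: real
  assumes "0 < l" and "0 \<le> \<delta>" and "\<delta> \<le> \<tau>" and "0 \<le> \<beta>" and "\<beta> \<le> 1"
  shows "\<bar>exp (- l * \<delta>) - 1\<bar> \<le> (l * \<tau>) powr \<beta>"
proof -
  have "l * \<delta> \<le> l * \<tau>"
    using assms by (intro mult_left_mono) auto
  then have "1 - exp (- l * \<delta>) \<le> l * \<tau>"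
    using exp_ge_add_one_self[of "- l * \<delta>"] by linarith
  moreover have "exp (- l * \<delta>) \<le> 1"
    using assms by simp
  ultimately have "\<bar>exp (- l * \<delta>) - 1\<bar> \<le> min 1 (l * \<tau>)"
    by simp
  also have "\<dots> \<le> (l * \<tau>) powr \<beta>"
  proof (cases "l * \<tau> \<le> 1")
    case True
    have "(l * \<tau>) powr 1 \<le> (l * \<tau>) powr \<beta>"
      using True assms by (intro powr_mono') auto
    then show ?thesis using assms by simp
  next
    case False
    then show ?thesis using assms by (simp add: ge_one_powr_ge_zero)
  qed
  finally show ?thesis .
qed

lemma Theta1_L4_moment_le:
  fixes P :: "'a measure" and W :: "nat \<Rightarrow> real \<Rightarrow> 'a \<Rightarrow> real"
  assumes P: "prob_space P" and fbm: "\<And>k. is_fbm P H (W k)"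
    and ind: "prob_space.indep_vars P (\<lambda>_. Pi\<^sub>M UNIV (\<lambda>_. borel)) (\<lambda>k \<omega> t. W k t \<omega>) UNIV"
    and "0 < \<tau>" and "0 \<le> t" and "0 \<le> \<alpha>" and "\<alpha> \<le> H" and "H \<le> 1"
  shows "(\<integral>\<^sup>+\<omega>. ennreal (L4pow4 (Theta1 W N \<tau> t \<omega>)) \<partial>P)
    \<le> ennreal (12 * (\<Sum>k=1..N. (5 * \<tau> powr (H - \<alpha>) * lam k powr (- \<alpha>))^2)^2)"
proof -
  note \<kappa> = kappa_bounds[OF \<open>0 < \<tau>\<close> \<open>0 \<le> t\<close>]
  have kernel: "exp_kernel 1 (lam k) t = (\<lambda>s. exp (- lam k * (t - s)))" for k
    by (simp add: exp_kernel_def fun_eq_iff)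
  have "Theta1 W N \<tau> t \<omega> = (\<lambda>x. \<Sum>k=1..N. wint (exp_kernel 1 (lam k) t) (kappa \<tau> t) t (W k) \<omega> * phi k x)"
    for \<omega>
    by (intro ext) (simp add: Theta1_def kernel)
  moreover have "y powr H \<le> \<tau> powr (H - \<alpha>) * y powr \<alpha>" if "0 \<le> y" "y \<le> t - kappa \<tau> t" for y
  proof -
    have "y powr (H - \<alpha>) \<le> \<tau> powr (H - \<alpha>)"
      using that \<kappa> \<open>\<alpha> \<le> H\<close> by (intro powr_mono2) auto
    then have "y powr (H - \<alpha>) * y powr \<alpha> \<le> \<tau> powr (H - \<alpha>) * y powr \<alpha>"
      by (rule mult_right_mono) simp
    then show ?thesis
      by (simp flip: powr_add)
  qed
  ultimately show ?thesis
    using \<kappa> assms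
    by (simp only:) (rule wint_exp_kernel_L4_moment_le[OF P fbm ind, where M = "\<tau> powr (H - \<alpha>)" and \<gamma> = \<alpha>]; simp)
qed

lemma Theta2_L4_moment_le:
  fixes P :: "'a measure" and W :: "nat \<Rightarrow> real \<Rightarrow> 'a \<Rightarrow> real"
  assumes P: "prob_space P" and fbm: "\<And>k. is_fbm P H (W k)"
    and ind: "prob_space.indep_vars P (\<lambda>_. Pi\<^sub>M UNIV (\<lambda>_. borel)) (\<lambda>k \<omega> t. W k t \<omega>) UNIV"
    and "0 < \<tau>" and "0 \<le> t" and "0 \<le> \<alpha>" and "\<alpha> \<le> H" and "H \<le> 1"
  shows "(\<integral>\<^sup>+\<omega>. ennreal (L4pow4 (Theta2 W N \<tau> t \<omega>)) \<partial>P)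
    \<le> ennreal (12 * (\<Sum>k=1..N. (5 * \<tau> powr (H - \<alpha>) * lam k powr (- \<alpha>))^2)^2)"
proof -
  note \<kappa> = kappa_bounds[OF \<open>0 < \<tau>\<close> \<open>0 \<le> t\<close>]
  define A where "A k = exp (- lam k * (t - kappa \<tau> t)) - 1" for k
  have kernel: "exp_kernel (A k) (lam k) (kappa \<tau> t)
      = (\<lambda>s. exp (- lam k * (t - s)) - exp (- lam k * (kappa \<tau> t - s)))" for k
    by (simp add: A_def exp_kernel_def fun_eq_iff algebra_simps flip: exp_add)
  have "Theta2 W N \<tau> t \<omega> = (\<lambda>x. \<Sum>k=1..N. wint (exp_kernel (A k) (lam k) (kappa \<tau> t)) 0 (kappa \<tau> t) (W k) \<omega> * phi k x)"
    for \<omega>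
    by (intro ext) (simp add: Theta2_def kernel)
  moreover have "5 * 1 * \<bar>A k\<bar> * lam k powr (- H) \<le> 5 * \<tau> powr (H - \<alpha>) * lam k powr (- \<alpha>)"
    if "k \<in> {1..N}" for k
  proof -
    have "0 < lam k"
      using that by (simp add: lam_def)
    then have "\<bar>A k\<bar> \<le> (lam k * \<tau>) powr (H - \<alpha>)"
      unfolding A_def using \<kappa> assms by (intro abs_exp_neg_minus_1_le_powr) auto
    then have "\<bar>A k\<bar> * lam k powr (- H) \<le> (lam k * \<tau>) powr (H - \<alpha>) * lam k powr (- H)"
      by (rule mult_right_mono) simp
    also have "\<dots> = \<tau> powr (H - \<alpha>) * lam k powr (- \<alpha>)"
      using \<open>0 < lam k\<close> \<open>0 < \<tau>\<close> by (simp add: powr_mult mult_ac flip: powr_add)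
    finally show ?thesis
      by simp
  qed
  ultimately show ?thesis
    using \<kappa> assms
    by (simp only:) (rule wint_exp_kernel_L4_moment_le[OF P fbm ind, where M = 1 and \<gamma> = H]; simp)
qed

lemma lam_powr_le:
  assumes "1 \<le> k" and "0 \<le> \<alpha>"
  shows "lam k powr (- 2 * \<alpha>) \<le> real k powr (- 4 * \<alpha>)"
proof -
  have "lam k = (real k * pi) powr 2"
    using assms by (simp add: lam_def powr_realpow power_mult_distrib)
  then have "lam k powr (- 2 * \<alpha>) = (real k * pi) powr (2 * (- 2 * \<alpha>))"
    by (simp only: powr_powr)
  also have "\<dots> = real k powr (- 4 * \<alpha>) * pi powr (- 4 * \<alpha>)"
    using assms by (simp add: powr_mult)
  also have "\<dots> \<le> real k powr (- 4 * \<alpha>) * 1"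
    using assms pi_gt3 by (intro mult_left_mono) (auto simp: powr_le1 ge_one_powr_ge_zero powr_minus_divide)
  finally show ?thesis by simp
qed

lemma sum_sq_eigen_rate_le:
  assumes "0 < \<tau>" and "1/4 < \<alpha>"
  shows "12 * (\<Sum>k=1..N. (5 * \<tau> powr (H - \<alpha>) * lam k powr (- \<alpha>))^2)^2
    \<le> 7500 * (\<Sum>k. real k powr (- 4 * \<alpha>))^2 * \<tau> powr (4 * (H - \<alpha>))"
proof -
  define S where "S = (\<Sum>k. real k powr (- 4 * \<alpha>))"
  have "summable (\<lambda>k. real k powr (- 4 * \<alpha>))"
    using assms by (subst summable_real_powr_iff) auto
  then have "(\<Sum>k=1..N. real k powr (- 4 * \<alpha>)) \<le> S"
    unfolding S_def by (rule sum_le_suminf) auto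
  moreover have "(\<Sum>k=1..N. lam k powr (- 2 * \<alpha>)) \<le> (\<Sum>k=1..N. real k powr (- 4 * \<alpha>))"
    using assms by (intro sum_mono lam_powr_le) auto
  moreover have "(5 * \<tau> powr (H - \<alpha>) * lam k powr (- \<alpha>))^2 = 25 * \<tau> powr (2 * (H - \<alpha>)) * lam k powr (- 2 * \<alpha>)"
    for k
  proof -
    have "\<tau> powr (2 * (H - \<alpha>)) = \<tau> powr (H - \<alpha>) * \<tau> powr (H - \<alpha>)"
      "lam k powr (- 2 * \<alpha>) = lam k powr (- \<alpha>) * lam k powr (- \<alpha>)"
      by (simp_all flip: powr_add)
    then show ?thesis
      by (simp add: power2_eq_square)
  qed
  ultimately have "(\<Sum>k=1..N. (5 * \<tau> powr (H - \<alpha>) * lam k powr (- \<alpha>))^2) \<le> 25 * \<tau> powr (2 * (H - \<alpha>)) * S"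
    by (simp add: mult_left_mono flip: sum_distrib_left)
  then have "(\<Sum>k=1..N. (5 * \<tau> powr (H - \<alpha>) * lam k powr (- \<alpha>))^2)^2 \<le> (25 * \<tau> powr (2 * (H - \<alpha>)) * S)^2"
    by (intro power_mono sum_nonneg) auto
  also have "\<dots> = 625 * S^2 * \<tau> powr (4 * (H - \<alpha>))"
  proof -
    have "(\<tau> powr (2 * (H - \<alpha>)))^2 = \<tau> powr (4 * (H - \<alpha>))"
      by (simp add: power2_eq_square flip: powr_add)
    then show ?thesis
      by (simp add: power_mult_distrib)
  qed
  finally show ?thesis
    by (simp add: S_def mult_ac)
qed

lemma Theta_L4_moments_le:
  fixes P :: "'a measure" and W :: "nat \<Rightarrow> real \<Rightarrow> 'a \<Rightarrow> real"
  assumes "prob_space P" and "\<And>k. is_fbm P H (W k)"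
    and "prob_space.indep_vars P (\<lambda>_. Pi\<^sub>M UNIV (\<lambda>_. borel)) (\<lambda>k \<omega> t. W k t \<omega>) UNIV"
    and "0 < \<tau>" and "0 \<le> t" and "1/4 < \<alpha>" and "\<alpha> \<le> H" and "H \<le> 1"
  shows "(\<integral>\<^sup>+\<omega>. ennreal (L4pow4 (Theta1 W N \<tau> t \<omega>)) \<partial>P)
      \<le> ennreal (7500 * (\<Sum>k. real k powr (- 4 * \<alpha>))^2 * \<tau> powr (4 * (H - \<alpha>)))"
    and "(\<integral>\<^sup>+\<omega>. ennreal (L4pow4 (Theta2 W N \<tau> t \<omega>)) \<partial>P)
      \<le> ennreal (7500 * (\<Sum>k. real k powr (- 4 * \<alpha>))^2 * \<tau> powr (4 * (H - \<alpha>)))"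
  using Theta1_L4_moment_le[OF assms(1-5), where \<alpha> = \<alpha> and N = N]
    Theta2_L4_moment_le[OF assms(1-5), where \<alpha> = \<alpha> and N = N]
    ennreal_leI[OF sum_sq_eigen_rate_le[OF \<open>0 < \<tau>\<close> \<open>1/4 < \<alpha>\<close>, where N = N and H = H]] assms(6-8)
  by (auto intro: order_trans)

theorem mainTheorem7:
  fixes P :: "'a measure" and W :: "nat \<Rightarrow> real \<Rightarrow> 'a \<Rightarrow> real"
    and H T :: real
  assumes "prob_space P"
    and "1/2 < H" and "H < 1" and "0 < T"
    and "\<And>k. is_fbm P H (W k)"
    and "prob_space.indep_vars P (\<lambda>_. Pi\<^sub>M UNIV (\<lambda>_. borel)) (\<lambda>k \<omega> t. W k t \<omega>) UNIV"
  shows "\<exists>\<epsilon>0>0. \<forall>\<epsilon>. 0 < \<epsilon> \<and> \<epsilon> < \<epsilon>0 \<longrightarrow> (\<exists>C. \<forall>(N::nat) (Mst::nat) t.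
            0 < Mst \<and> 0 \<le> t \<and> t \<le> T \<longrightarrow>
            (\<integral>\<^sup>+\<omega>. ennreal (L4pow4 (Theta1 W N (T / real Mst) t \<omega>)) \<partial>P)
              \<le> ennreal (C * (T / real Mst) powr (4*H - 1 - 2*\<epsilon>)) \<and>
            (\<integral>\<^sup>+\<omega>. ennreal (L4pow4 (Theta2 W N (T / real Mst) t \<omega>)) \<partial>P)
              \<le> ennreal (C * (T / real Mst) powr (4*H - 1 - 2*\<epsilon>)))"
proof (rule exI[of _ "2 * H - 1/2"], intro conjI allI impI, goal_cases)
  case 1
  then show ?case
    using assms(2) by simp
next
  case (2 \<epsilon>)
  define \<alpha> where "\<alpha> = 1/4 + \<epsilon>/2"
  have \<alpha>: "1/4 < \<alpha>" "\<alpha> \<le> H" "H \<le> 1" and exponent: "4 * (H - \<alpha>) = 4*H - 1 - 2*\<epsilon>"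
    using 2 assms(3) by (auto simp: \<alpha>_def)
  show ?case
    using Theta_L4_moments_le[OF assms(1,5,6) _ _ \<alpha>, unfolded exponent] assms(4)
    by (intro exI[of _ "7500 * (\<Sum>k. real k powr (- 4 * \<alpha>))^2"] allI impI conjI) auto
qed

end
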